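(* Let $1/4<a\le1/3$ and $m\ge6$ be an integer. For $\theta\in(2\pi/3,\pi)$ with $1-4a\cos^2\theta\neq0$ define \[ \zeta(\theta)=\frac{(2a-1)\cos\theta+\sqrt{(1-4a)\cos^2\theta+a}}{1-4a\cos^2\theta},\qquad g_m(\theta)=\frac{(\zeta(\theta)-\cos\theta)\sin((m+1)\theta)}{\sin\theta}-\cos((m+1)\theta)+\frac{1}{\zeta(\theta)^{m+1}}. \] Then there exists $h\in\mathbb{N}$ with $\lfloor 2(m+1)/3\rfloor+1\le h-1<h\le m+1$ such that \[ \theta_{h-1}:=\frac{h-1}{m+1}\pi<\cos^{-1}\!\left(-\frac{1}{2\sqrt a}\right)\le\frac{h}{m+1}\pi=:\theta_h. \] Furthermore, provided $\cos^{-1}\!\left(-\frac{1}{2\sqrt a}\right)\neq\frac{h}{m+1}\pi$, the function $g_m$ has at least two zeros in the open interval $J_h=\left(\frac{h-1}{m+1}\pi,\frac{h}{m+1}\pi\right)$ whenever $h\le m$, and at least one zero in $J_h$ when $h=m+1$.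
   Context: Here $\cos^{-1}$ takes values in $[0,\pi]$. The functions $\zeta$ and $g_m$ are real-valued on their domain and have a vertical asymptote at $\theta=\cos^{-1}(-1/(2\sqrt a))$, where $1-4a\cos^2\theta=0$; zeros of $g_m$ are counted at points of $J_h$ where $g_m$ is defined. *)

theory Defs
  imports Complex_Main
begin

definition zeta :: "real \<Rightarrow> real \<Rightarrow> real" where
  "zeta a \<theta> = ((2*a - 1) * cos \<theta> + sqrt ((1 - 4*a) * (cos \<theta>)\<^sup>2 + a))
                 / (1 - 4*a*(cos \<theta>)\<^sup>2)"

definition g :: "nat \<Rightarrow> real \<Rightarrow> real \<Rightarrow> real" where
  "g m a \<theta> = (zeta a \<theta> - cos \<theta>) * sin ((real m + 1) * \<theta>) / sin \<theta>
               - cos ((real m + 1) * \<theta>) + 1 / (zeta a \<theta>) ^ (m + 1)"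

definition g_dom :: "real \<Rightarrow> real \<Rightarrow> bool" where
  "g_dom a \<theta> \<longleftrightarrow> 2*pi/3 < \<theta> \<and> \<theta> < pi \<and> 1 - 4*a*(cos \<theta>)\<^sup>2 \<noteq> 0 \<and> zeta a \<theta> \<noteq> 0"

end

theory Submission
  imports Defs
begin

text \<open>Write \<open>D = 1 - 4 a cos\<^sup>2 \<theta>\<close> and \<open>N\<close> for the denominator and numerator of \<open>\<zeta>\<close>, and
  clear denominators: \<open>G = D g\<close> is continuous on \<open>(\<pi>/2, \<pi>)\<close>, and \<open>N > 0\<close> there. The critical
  angle \<open>\<alpha> = arccos (-1/(2\<surd>a)) \<ge> 5\<pi>/6\<close> is where \<open>D\<close> changes sign from positive to negative.
  At a grid point \<open>j\<pi>/(m+1)\<close> the sine term of \<open>G\<close> vanishes and \<open>|D| < N\<close>, so the sign of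
  \<open>G\<close> is that of \<open>-(-1)\<^sup>j D\<close>; at \<open>\<alpha>\<close> only the sine term survives, and \<open>(-1)\<^sup>k G(\<alpha>) > 0\<close> when
  \<open>\<alpha>\<close> lies in the cell \<open>(\<theta>\<^sub>k, \<theta>\<^sub>k\<^sub>+\<^sub>1)\<close>. So \<open>G\<close> changes sign on \<open>(\<theta>\<^sub>k, \<alpha>)\<close> and, when
  \<open>\<theta>\<^sub>k\<^sub>+\<^sub>1 < \<pi>\<close>, on \<open>(\<alpha>, \<theta>\<^sub>k\<^sub>+\<^sub>1)\<close>; since \<open>D \<noteq> 0\<close> off \<open>\<alpha>\<close>, these zeros are zeros of \<open>g\<close>.\<close>

lemma abs_mult_power_less:
  fixes d n :: real
  assumes "\<bar>d\<bar> < n" "d \<noteq> 0"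
  shows "\<bar>d * (d / n) ^ Suc k\<bar> < \<bar>d\<bar>"
proof -
  have "0 < \<bar>d / n\<bar>"
    using assms by simp
  moreover have "\<bar>d / n\<bar> < 1"
    using assms by simp
  ultimately have "\<bar>d / n\<bar> ^ Suc k < 1"
    by (rule power_Suc_less_one)
  then have "\<bar>d\<bar> * \<bar>d / n\<bar> ^ Suc k < \<bar>d\<bar> * 1"
    using assms(2) by (intro mult_strict_left_mono) auto
  then show ?thesis
    by (simp add: abs_mult power_abs)
qed

lemma minus_one_power_mult_sin_pos:
  assumes "real k * pi < x" "x < real (Suc k) * pi"
  shows "0 < (-1) ^ k * sin x"
proof -
  have "sin x = sin (x - real k * pi) * (-1) ^ k"
    using sin_add[of "x - real k * pi" "real k * pi"] by simp
  moreover have "0 < sin (x - real k * pi)"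
    using assms by (intro sin_gt_zero) (auto simp: algebra_simps)
  ultimately show ?thesis
    by (metis left_minus_one_mult_self mult.commute)
qed

lemma cos_lt_zero: "pi/2 < x \<Longrightarrow> x \<le> pi \<Longrightarrow> cos x < 0"
  using cos_monotone_0_pi[of "pi/2" x] by simp

lemma cos_between_two_thirds_pi_and_pi:
  assumes "2*pi/3 < \<theta>" "\<theta> < pi"
  shows "-1 < cos \<theta>" "cos \<theta> < -1/2"
proof -
  have "0 \<le> \<theta>"
    using assms pi_gt_zero by linarith
  then show "-1 < cos \<theta>"
    using assms cos_mono_less_eq[of pi \<theta>] by simp
  show "cos \<theta> < -1/2"
    using assms \<open>0 \<le> \<theta>\<close> cos_mono_less_eq[of \<theta> "2*pi/3"] by (simp add: cos_120)
qed

lemma IVT_sign_change: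
  fixes f :: "real \<Rightarrow> real"
  assumes "l \<le> r" "continuous_on {l..r} f" "f l * f r < 0"
  shows "\<exists>x\<in>{l<..<r}. f x = 0"
proof -
  obtain x where x: "x \<in> {l..r}" "f x = 0"
  proof (cases "f l < 0")
    case True
    then have "0 < f r"
      using assms(3) by (simp add: mult_less_0_iff)
    then show ?thesis
      using IVT'[of f l 0 r] True assms that by fastforce
  next
    case False
    then have "f r < 0" "0 < f l"
      using assms(3) by (auto simp: mult_less_0_iff)
    then show ?thesis
      using IVT2'[of f r 0 l] assms that by fastforce
  qed
  moreover have "x \<noteq> l" "x \<noteq> r"
    using x assms(3) by auto
  ultimately show ?thesis
    by auto
qed

lemma exists_nat_less_le_Suc:
  fixes x :: real
  assumes "0 < x"
  shows "\<exists>k::nat. real k < x \<and> x \<le> real k + 1"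
proof
  have "0 < \<lceil>x\<rceil>"
    using assms by simp
  then have "real (nat (\<lceil>x\<rceil> - 1)) = of_int \<lceil>x\<rceil> - 1"
    by simp
  then show "real (nat (\<lceil>x\<rceil> - 1)) < x \<and> x \<le> real (nat (\<lceil>x\<rceil> - 1)) + 1"
    using ceiling_correct[of x] by simp
qed

definition zeta_num :: "real \<Rightarrow> real \<Rightarrow> real" where
  "zeta_num a c = (2*a - 1) * c + sqrt ((1 - 4*a) * c\<^sup>2 + a)"

definition zeta_den :: "real \<Rightarrow> real \<Rightarrow> real" where
  "zeta_den a c = 1 - 4*a*c\<^sup>2"

lemma zeta_eq_num_div_den: "zeta a \<theta> = zeta_num a (cos \<theta>) / zeta_den a (cos \<theta>)"
  unfolding zeta_def zeta_num_def zeta_den_def ..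

lemma zeta_num_pos:
  assumes "0 \<le> a" "a \<le> 1/3" "-1 \<le> c" "c < 0"
  shows "0 < zeta_num a c"
proof -
  have "(1 - 4*a) * c\<^sup>2 + a = (1 - 3*a) * c\<^sup>2 + a * (1 - c\<^sup>2)"
    by algebra
  moreover have "c\<^sup>2 \<le> 1"
    using assms by (simp add: abs_square_le_1)
  ultimately have "0 \<le> (1 - 4*a) * c\<^sup>2 + a"
    using assms by simp
  moreover have "0 < (2*a - 1) * c"
    using assms by (simp add: mult_neg_neg)
  ultimately show ?thesis
    unfolding zeta_num_def by (simp add: add_pos_nonneg)
qed

text \<open>In both comparisons with the denominator, the claim reads \<open>R < sqrt S\<close> for the
  radicand \<open>S\<close>, and \<open>S - R\<^sup>2\<close> factors as \<open>D\<close> times a quantity of known sign.\<close>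

lemma zeta_den_less_num:
  assumes "0 \<le> a" "c < -1/2" "0 < zeta_den a c"
  shows "zeta_den a c < zeta_num a c"
proof -
  define D where "D = zeta_den a c"
  define R where "R = D - (2*a - 1) * c"
  have factor: "(1 - 4*a) * c\<^sup>2 + a - R\<^sup>2 = D * ((c + 1/2) * (2*a*(1 + 2*c) - 2))"
    unfolding R_def D_def zeta_den_def by algebra
  have "a * (1 + 2*c) \<le> 0"
    using assms by (simp add: mult_nonneg_nonpos)
  then have "(c + 1/2) * (2*a*(1 + 2*c) - 2) > 0"
    using assms by (intro mult_neg_neg) auto
  then have "0 < D * ((c + 1/2) * (2*a*(1 + 2*c) - 2))"
    using assms(3) D_def by simp
  then have "R\<^sup>2 < (1 - 4*a) * c\<^sup>2 + a"
    using factor by linarith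
  then have "R < sqrt ((1 - 4*a) * c\<^sup>2 + a)"
    using real_less_rsqrt by blast
  then show ?thesis
    unfolding R_def D_def zeta_num_def by linarith
qed

lemma neg_zeta_den_less_num:
  assumes "1/4 < a" "a \<le> 1/3" "-1 < c" "c < 0" "zeta_den a c < 0"
  shows "- zeta_den a c < zeta_num a c"
proof -
  define D where "D = zeta_den a c"
  define R where "R = - D - (2*a - 1) * c"
  have factor: "(1 - 4*a) * c\<^sup>2 + a - R\<^sup>2 = - D * ((c + 1) * (8*a - 2 - 4*a*c) + (3 - 9*a))"
    unfolding R_def D_def zeta_den_def by algebra
  have "a * c < 0"
    using assms by (simp add: mult_pos_neg)
  then have "0 < (c + 1) * (8*a - 2 - 4*a*c)"
    using assms by (intro mult_pos_pos) auto
  then have "0 < - D * ((c + 1) * (8*a - 2 - 4*a*c) + (3 - 9*a))"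
    using assms(2,5) D_def by (intro mult_pos_pos) auto
  then have "R\<^sup>2 < (1 - 4*a) * c\<^sup>2 + a"
    using factor by linarith
  then have "R < sqrt ((1 - 4*a) * c\<^sup>2 + a)"
    using real_less_rsqrt by blast
  then show ?thesis
    unfolding R_def D_def zeta_num_def by linarith
qed

lemma abs_zeta_den_less_num:
  assumes "1/4 < a" "a \<le> 1/3" "-1 < c" "c < -1/2" "zeta_den a c \<noteq> 0"
  shows "\<bar>zeta_den a c\<bar> < zeta_num a c"
  using assms zeta_den_less_num[of a c] neg_zeta_den_less_num[of a c] by (cases "0 < zeta_den a c") auto

text \<open>Unlike \<open>g\<close>, this is continuous across the critical angle, where the denominator of
  \<open>\<zeta>\<close> vanishes.\<close>

definition g_cleared :: "nat \<Rightarrow> real \<Rightarrow> real \<Rightarrow> real" where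
  "g_cleared m a \<theta> =
     (zeta_num a (cos \<theta>) - cos \<theta> * zeta_den a (cos \<theta>)) * sin ((real m + 1) * \<theta>) / sin \<theta>
     - cos ((real m + 1) * \<theta>) * zeta_den a (cos \<theta>)
     + zeta_den a (cos \<theta>) * (zeta_den a (cos \<theta>) / zeta_num a (cos \<theta>)) ^ (m + 1)"

lemma g_cleared_eq_mult_g:
  assumes "zeta_num a (cos \<theta>) \<noteq> 0" "zeta_den a (cos \<theta>) \<noteq> 0"
  shows "g_cleared m a \<theta> = zeta_den a (cos \<theta>) * g m a \<theta>"
  using assms unfolding g_cleared_def g_def zeta_eq_num_div_den
  by (simp add: algebra_simps power_divide diff_divide_distrib)

lemma g_cleared_node_sign:
  assumes "zeta_den a (cos \<theta>) \<noteq> 0" "\<bar>zeta_den a (cos \<theta>)\<bar> < zeta_num a (cos \<theta>)"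
    and "\<theta> = real j / (real m + 1) * pi"
  shows "(-1) ^ j * zeta_den a (cos \<theta>) * g_cleared m a \<theta> < 0"
proof -
  define D where "D = zeta_den a (cos \<theta>)"
  define r where "r = D * (D / zeta_num a (cos \<theta>)) ^ Suc m"
  have "(real m + 1) * \<theta> = real j * pi"
    using assms(3) by simp
  then have "g_cleared m a \<theta> = - ((-1) ^ j * D) + r"
    unfolding g_cleared_def D_def r_def by simp
  then have "(-1) ^ j * D * g_cleared m a \<theta> = - (D * D) + (-1) ^ j * D * r"
    by (simp add: ring_distribs mult.assoc)
  also have "(-1) ^ j * D * r \<le> \<bar>(-1) ^ j * D * r\<bar>"
    by (rule abs_ge_self)
  also have "\<dots> = \<bar>D\<bar> * \<bar>r\<bar>"
    by (simp add: abs_mult)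
  also have "\<bar>D\<bar> * \<bar>r\<bar> < \<bar>D\<bar> * \<bar>D\<bar>"
    using assms abs_mult_power_less[of D] unfolding D_def r_def by (intro mult_strict_left_mono) auto
  finally show ?thesis
    unfolding D_def by (simp add: abs_mult_self_eq)
qed

lemma continuous_on_g_cleared:
  assumes "0 \<le> a" "a \<le> 1/3" "pi/2 < l" "r < pi"
  shows "continuous_on {l..r} (g_cleared m a)"
proof -
  have "0 < sin t \<and> 0 < zeta_num a (cos t)" if "t \<in> {l..r}" for t
  proof -
    have "pi/2 < t" "t < pi"
      using that assms by auto
    then show ?thesis
      using assms cos_ge_minus_one[of t] cos_lt_zero[of t]
      by (auto intro: sin_gt_zero zeta_num_pos)
  qed
  moreover have "continuous_on {l..r} (\<lambda>t. zeta_num a (cos t))"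
    unfolding zeta_num_def by (intro continuous_intros)
  ultimately show ?thesis
    unfolding g_cleared_def zeta_den_def by (intro continuous_intros) fastforce+
qed

lemma g_zero_of_g_cleared_zero:
  assumes "0 \<le> a" "a \<le> 1/3" "2*pi/3 < \<theta>" "\<theta> < pi"
    and "zeta_den a (cos \<theta>) \<noteq> 0" "g_cleared m a \<theta> = 0"
  shows "g_dom a \<theta> \<and> g m a \<theta> = 0"
proof -
  have "0 < zeta_num a (cos \<theta>)"
    using assms cos_lt_zero[of \<theta>] cos_ge_minus_one[of \<theta>] pi_gt_zero by (intro zeta_num_pos) auto
  then have "g m a \<theta> = 0" "zeta a \<theta> \<noteq> 0"
    using assms(5,6) g_cleared_eq_mult_g[of a \<theta> m] by (auto simp: zeta_eq_num_div_den)
  then show ?thesis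
    using assms(3-5) unfolding g_dom_def zeta_den_def by blast
qed

lemma g_root_of_sign_change:
  assumes "0 \<le> a" "a \<le> 1/3" "2*pi/3 < l" "l < r" "r < pi"
    and "g_cleared m a l * g_cleared m a r < 0"
    and "\<And>t. t \<in> {l<..<r} \<Longrightarrow> zeta_den a (cos t) \<noteq> 0"
  shows "\<exists>x\<in>{l<..<r}. g_dom a x \<and> g m a x = 0"
proof -
  have "continuous_on {l..r} (g_cleared m a)"
    using assms pi_gt_zero by (intro continuous_on_g_cleared) auto
  then obtain x where "x \<in> {l<..<r}" "g_cleared m a x = 0"
    using IVT_sign_change[of l r "g_cleared m a"] assms(4,6) by auto
  then show ?thesis
    using assms g_zero_of_g_cleared_zero[of a x m] by auto
qed

definition crit_angle :: "real \<Rightarrow> real" where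
  "crit_angle a = arccos (- 1 / (2 * sqrt a))"

lemma minus_inverse_two_sqrt_bounds:
  assumes "1/4 < a"
  shows "-1 < - 1 / (2 * sqrt a)" "- 1 / (2 * sqrt a) < 0"
proof -
  have "sqrt (1/4) < sqrt a"
    using assms by (rule real_sqrt_less_mono)
  then have "1 < 2 * sqrt a"
    by (simp add: real_sqrt_divide)
  then show "-1 < - 1 / (2 * sqrt a)" "- 1 / (2 * sqrt a) < 0"
    using assms by (auto simp: divide_less_eq)
qed

lemma cos_crit_angle:
  assumes "1/4 < a"
  shows "cos (crit_angle a) = - 1 / (2 * sqrt a)"
  unfolding crit_angle_def
  using minus_inverse_two_sqrt_bounds[OF assms] by (intro cos_arccos) linarith+

lemma zeta_den_eq_crit_angle:
  assumes "1/4 < a"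
  shows "zeta_den a c = 4 * a * ((cos (crit_angle a))\<^sup>2 - c\<^sup>2)"
  using assms unfolding zeta_den_def cos_crit_angle[OF assms]
  by (simp add: power_divide power_mult_distrib algebra_simps)

lemma crit_angle_bounds:
  assumes "1/4 < a"
  shows "0 < crit_angle a" "crit_angle a < pi"
  unfolding crit_angle_def
  using minus_inverse_two_sqrt_bounds[OF assms] arccos_lt_bounded[of "- 1 / (2 * sqrt a)"]
  by linarith+

lemma crit_angle_ge_five_sixths_pi:
  assumes "1/4 < a" "a \<le> 1/3"
  shows "5*pi/6 \<le> crit_angle a"
proof -
  have "sqrt 3 * sqrt a \<le> 1"
    using assms real_sqrt_le_mono[of "3 * a" 1] by (simp add: real_sqrt_mult)
  moreover have "0 < sqrt a"
    using assms by simp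
  ultimately have "- 1 / (2 * sqrt a) \<le> - (sqrt 3 / 2)"
    by (simp add: field_simps)
  moreover have "cos (pi - pi/6) = - (sqrt 3 / 2)"
    by (simp only: cos_pi_minus cos_30)
  ultimately have "cos (crit_angle a) \<le> cos (pi - pi/6)"
    using cos_crit_angle[OF assms(1)] by simp
  then show ?thesis
    using crit_angle_bounds[OF assms(1)] cos_mono_le_eq[of "crit_angle a" "pi - pi/6"] by auto
qed

lemma zeta_den_pos_before_crit_angle:
  assumes "1/4 < a" "pi/2 \<le> \<theta>" "\<theta> < crit_angle a"
  shows "0 < zeta_den a (cos \<theta>)"
proof -
  have "cos (crit_angle a) < cos \<theta>"
    using assms crit_angle_bounds[OF assms(1)] pi_gt_zero
    by (subst cos_mono_less_eq) linarith+
  moreover have "cos \<theta> \<le> 0"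
    using assms crit_angle_bounds[OF assms(1)] cos_mono_le_eq[of \<theta> "pi/2"] by simp
  ultimately have "(- cos \<theta>)\<^sup>2 < (- cos (crit_angle a))\<^sup>2"
    by (intro power_strict_mono) auto
  then show ?thesis
    using assms(1) zeta_den_eq_crit_angle[OF assms(1)] by simp
qed

lemma zeta_den_neg_after_crit_angle:
  assumes "1/4 < a" "crit_angle a < \<theta>" "\<theta> \<le> pi"
  shows "zeta_den a (cos \<theta>) < 0"
proof -
  have "cos \<theta> < cos (crit_angle a)"
    using assms crit_angle_bounds[OF assms(1)] by (subst cos_mono_less_eq) linarith+
  moreover have "cos (crit_angle a) < 0"
    using minus_inverse_two_sqrt_bounds[OF assms(1)] cos_crit_angle[OF assms(1)] by simp
  ultimately have "(- cos (crit_angle a))\<^sup>2 < (- cos \<theta>)\<^sup>2"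
    by (intro power_strict_mono) auto
  then show ?thesis
    using assms(1) zeta_den_eq_crit_angle[OF assms(1)] by (simp add: mult_pos_neg)
qed

lemma g_cleared_crit_angle_sign:
  assumes "1/4 < a" "a \<le> 1/3"
    and "real k / (real m + 1) * pi < crit_angle a" "crit_angle a < real (Suc k) / (real m + 1) * pi"
  shows "0 < (-1) ^ k * g_cleared m a (crit_angle a)"
proof -
  define \<alpha> where "\<alpha> = crit_angle a"
  have "zeta_den a (cos \<alpha>) = 0"
    unfolding \<alpha>_def zeta_den_eq_crit_angle[OF assms(1)] by simp
  then have "(-1) ^ k * g_cleared m a \<alpha>
      = zeta_num a (cos \<alpha>) * ((-1) ^ k * sin ((real m + 1) * \<alpha>)) / sin \<alpha>"
    unfolding g_cleared_def by simp
  moreover have "0 < zeta_num a (cos \<alpha>)"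
    using assms minus_inverse_two_sqrt_bounds[OF assms(1)] cos_crit_angle[OF assms(1)]
    unfolding \<alpha>_def by (intro zeta_num_pos) auto
  moreover have "0 < (-1) ^ k * sin ((real m + 1) * \<alpha>)"
    using assms unfolding \<alpha>_def
    by (intro minus_one_power_mult_sin_pos) (simp_all add: field_simps)
  moreover have "0 < sin \<alpha>"
    using crit_angle_bounds[OF assms(1)] unfolding \<alpha>_def by (intro sin_gt_zero)
  ultimately show ?thesis
    unfolding \<alpha>_def by simp
qed

lemma g_root_before_crit_angle:
  assumes "1/4 < a" "a \<le> 1/3" "2*pi/3 < real k / (real m + 1) * pi"
    and "real k / (real m + 1) * pi < crit_angle a" "crit_angle a < real (Suc k) / (real m + 1) * pi"
  shows "\<exists>x\<in>{real k / (real m + 1) * pi <..< crit_angle a}. g_dom a x \<and> g m a x = 0"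
proof -
  define \<theta> where "\<theta> = real k / (real m + 1) * pi"
  have "2*pi/3 < \<theta>"
    using assms(3) unfolding \<theta>_def .
  then have D_pos: "0 < zeta_den a (cos t)" if "\<theta> \<le> t" "t < crit_angle a" for t
    using assms(1) that pi_gt_zero by (intro zeta_den_pos_before_crit_angle) linarith+
  have "-1 < cos \<theta>" "cos \<theta> < -1/2"
    using assms crit_angle_bounds[OF assms(1)] unfolding \<theta>_def
    by (intro cos_between_two_thirds_pi_and_pi; simp)+
  then have "(-1) ^ k * zeta_den a (cos \<theta>) * g_cleared m a \<theta> < 0"
    using assms D_pos[of \<theta>] abs_zeta_den_less_num[of a "cos \<theta>"] unfolding \<theta>_def
    by (intro g_cleared_node_sign) auto
  then have "zeta_den a (cos \<theta>) * ((-1) ^ k * g_cleared m a \<theta>) < zeta_den a (cos \<theta>) * 0"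
    by (simp add: mult.left_commute)
  then have "(-1) ^ k * g_cleared m a \<theta> < 0"
    using D_pos[of \<theta>] assms(4) unfolding \<theta>_def by (simp only: mult_less_cancel_left_pos)
  moreover have "0 < (-1) ^ k * g_cleared m a (crit_angle a)"
    using assms by (intro g_cleared_crit_angle_sign)
  ultimately have "((-1) ^ k * g_cleared m a \<theta>) * ((-1) ^ k * g_cleared m a (crit_angle a)) < 0"
    by (simp add: mult_neg_pos)
  then have "g_cleared m a \<theta> * g_cleared m a (crit_angle a) < 0"
    by (simp add: algebra_simps)
  moreover have "zeta_den a (cos t) \<noteq> 0" if "t \<in> {\<theta><..<crit_angle a}" for t
    using D_pos[of t] that by simp
  ultimately show ?thesis
    using assms \<open>2*pi/3 < \<theta>\<close> crit_angle_bounds[OF assms(1)] unfolding \<theta>_def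
    by (intro g_root_of_sign_change) auto
qed

lemma g_root_after_crit_angle:
  assumes "1/4 < a" "a \<le> 1/3" "Suc k \<le> m"
    and "real k / (real m + 1) * pi < crit_angle a" "crit_angle a < real (Suc k) / (real m + 1) * pi"
  shows "\<exists>x\<in>{crit_angle a <..< real (Suc k) / (real m + 1) * pi}. g_dom a x \<and> g m a x = 0"
proof -
  define \<theta> where "\<theta> = real (Suc k) / (real m + 1) * pi"
  have "\<theta> < pi"
    using assms(3) unfolding \<theta>_def by (simp add: divide_less_eq)
  have "2*pi/3 < crit_angle a"
    using crit_angle_ge_five_sixths_pi[OF assms(1,2)] pi_gt_zero by linarith
  have D_neg: "zeta_den a (cos t) < 0" if "crit_angle a < t" "t \<le> \<theta>" for t
    using assms(1) that \<open>\<theta> < pi\<close> by (intro zeta_den_neg_after_crit_angle) auto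
  have "crit_angle a < \<theta>"
    unfolding \<theta>_def by (rule assms(5))
  then have "-1 < cos \<theta>" "cos \<theta> < -1/2"
    using \<open>2*pi/3 < crit_angle a\<close> \<open>\<theta> < pi\<close> cos_between_two_thirds_pi_and_pi[of \<theta>] by auto
  then have "(-1) ^ Suc k * zeta_den a (cos \<theta>) * g_cleared m a \<theta> < 0"
    using assms D_neg[of \<theta>] abs_zeta_den_less_num[of a "cos \<theta>"] unfolding \<theta>_def
    by (intro g_cleared_node_sign) auto
  then have "(- zeta_den a (cos \<theta>)) * ((-1) ^ k * g_cleared m a \<theta>) < (- zeta_den a (cos \<theta>)) * 0"
    by (simp add: mult.left_commute)
  then have "(-1) ^ k * g_cleared m a \<theta> < 0"
    using D_neg[of \<theta>] assms(5) unfolding \<theta>_def by (simp only: mult_less_cancel_left_pos neg_0_less_iff_less)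
  moreover have "0 < (-1) ^ k * g_cleared m a (crit_angle a)"
    using assms by (intro g_cleared_crit_angle_sign)
  ultimately have "((-1) ^ k * g_cleared m a (crit_angle a)) * ((-1) ^ k * g_cleared m a \<theta>) < 0"
    by (simp add: mult_pos_neg)
  then have "g_cleared m a (crit_angle a) * g_cleared m a \<theta> < 0"
    by (simp add: algebra_simps)
  moreover have "zeta_den a (cos t) \<noteq> 0" if "t \<in> {crit_angle a<..<\<theta>}" for t
    using D_neg[of t] that by simp
  ultimately show ?thesis
    using assms \<open>2*pi/3 < crit_angle a\<close> \<open>\<theta> < pi\<close> unfolding \<theta>_def
    by (intro g_root_of_sign_change) auto
qed

lemma crit_angle_grid_bracket:
  assumes "1/4 < a" "a \<le> 1/3" "6 \<le> m"
  shows "\<exists>k::nat. \<lfloor>2 * (real m + 1) / 3\<rfloor> + 1 \<le> int k \<and> k \<le> m \<and>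
           2*pi/3 < real k / (real m + 1) * pi \<and>
           real k / (real m + 1) * pi < crit_angle a \<and> crit_angle a \<le> real (Suc k) / (real m + 1) * pi"
proof -
  define M where "M = real m + 1"
  have "7 \<le> M" "0 < M"
    using assms(3) unfolding M_def by simp_all
  obtain k :: nat where k: "real k < crit_angle a * M / pi" "crit_angle a * M / pi \<le> real k + 1"
    using exists_nat_less_le_Suc[of "crit_angle a * M / pi"] crit_angle_bounds[OF assms(1)] \<open>0 < M\<close>
    by auto
  have "crit_angle a * M / pi < M"
    using crit_angle_bounds[OF assms(1)] \<open>0 < M\<close> by (simp add: field_simps)
  then have "k \<le> m"
    using k(1) unfolding M_def by linarith
  have "5 * M / 6 \<le> crit_angle a * M / pi"
    using crit_angle_ge_five_sixths_pi[OF assms(1,2)] \<open>0 < M\<close> by (simp add: field_simps)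
  then have "2 * M / 3 < real k"
    using k(2) \<open>7 \<le> M\<close> by linarith
  then have "\<lfloor>2 * M / 3\<rfloor> < int k" "2*pi/3 < real k / M * pi"
    using \<open>0 < M\<close> by (simp_all add: floor_less_iff field_simps)
  moreover have "real k / M * pi < crit_angle a" "crit_angle a \<le> real (Suc k) / M * pi"
    using k \<open>0 < M\<close> by (simp_all add: field_simps)
  ultimately show ?thesis
    using \<open>k \<le> m\<close> unfolding M_def by (intro exI[of _ k]) auto
qed

lemma g_roots_in_grid_cell:
  assumes "1/4 < a" "a \<le> 1/3" "2*pi/3 < real k / (real m + 1) * pi"
    and "real k / (real m + 1) * pi < crit_angle a" "crit_angle a < real (Suc k) / (real m + 1) * pi"
  defines "J \<equiv> {real k / (real m + 1) * pi <..< real (Suc k) / (real m + 1) * pi}"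
  shows "\<exists>x\<in>J. g_dom a x \<and> g m a x = 0"
    and "Suc k \<le> m \<Longrightarrow> \<exists>x\<in>J. \<exists>y\<in>J. x \<noteq> y \<and> g_dom a x \<and> g_dom a y \<and> g m a x = 0 \<and> g m a y = 0"
proof -
  obtain x where x: "x \<in> {real k / (real m + 1) * pi <..< crit_angle a}" "g_dom a x" "g m a x = 0"
    using g_root_before_crit_angle[OF assms(1-5)] by blast
  then show "\<exists>x\<in>J. g_dom a x \<and> g m a x = 0"
    using assms(5) unfolding J_def by auto
  assume "Suc k \<le> m"
  then obtain y where y: "y \<in> {crit_angle a <..< real (Suc k) / (real m + 1) * pi}" "g_dom a y" "g m a y = 0"
    using g_root_after_crit_angle[OF assms(1,2) _ assms(4,5)] by blast
  then show "\<exists>x\<in>J. \<exists>y\<in>J. x \<noteq> y \<and> g_dom a x \<and> g_dom a y \<and> g m a x = 0 \<and> g m a y = 0"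
    using x assms(4) unfolding J_def by (intro bexI[of _ x] bexI[of _ y]) auto
qed

theorem lemma2p6:
  fixes a :: real and m :: nat
  assumes "1/4 < a" and "a \<le> 1/3" and "m \<ge> 6"
  shows "\<exists>h::nat.
     \<lfloor>2 * (real m + 1) / 3\<rfloor> + 1 \<le> int h - 1 \<and> int h - 1 < int h \<and> h \<le> m + 1 \<and>
     (real h - 1) / (real m + 1) * pi < arccos (- 1 / (2 * sqrt a)) \<and>
     arccos (- 1 / (2 * sqrt a)) \<le> real h / (real m + 1) * pi \<and>
     (arccos (- 1 / (2 * sqrt a)) \<noteq> real h / (real m + 1) * pi \<longrightarrow>
        (h \<le> m \<longrightarrow>
           (\<exists>x y. x \<noteq> y \<and>
              x \<in> {(real h - 1) / (real m + 1) * pi <..< real h / (real m + 1) * pi} \<and>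
              y \<in> {(real h - 1) / (real m + 1) * pi <..< real h / (real m + 1) * pi} \<and>
              g_dom a x \<and> g_dom a y \<and> g m a x = 0 \<and> g m a y = 0)) \<and>
        (h = m + 1 \<longrightarrow>
           (\<exists>x. x \<in> {(real h - 1) / (real m + 1) * pi <..< real h / (real m + 1) * pi} \<and>
              g_dom a x \<and> g m a x = 0)))"
proof -
  obtain k :: nat where k: "\<lfloor>2 * (real m + 1) / 3\<rfloor> + 1 \<le> int k" "k \<le> m"
    "2*pi/3 < real k / (real m + 1) * pi"
    "real k / (real m + 1) * pi < crit_angle a" "crit_angle a \<le> real (Suc k) / (real m + 1) * pi"
    using crit_angle_grid_bracket[OF assms] by blast
  have roots: "crit_angle a \<noteq> real (Suc k) / (real m + 1) * pi \<longrightarrow>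
      (Suc k \<le> m \<longrightarrow>
         (\<exists>x y. x \<noteq> y \<and>
            x \<in> {real k / (real m + 1) * pi <..< real (Suc k) / (real m + 1) * pi} \<and>
            y \<in> {real k / (real m + 1) * pi <..< real (Suc k) / (real m + 1) * pi} \<and>
            g_dom a x \<and> g_dom a y \<and> g m a x = 0 \<and> g m a y = 0)) \<and>
      (Suc k = m + 1 \<longrightarrow>
         (\<exists>x. x \<in> {real k / (real m + 1) * pi <..< real (Suc k) / (real m + 1) * pi} \<and>
            g_dom a x \<and> g m a x = 0))" (is "_ \<longrightarrow> ?zeros")
  proof (intro impI)
    assume "crit_angle a \<noteq> real (Suc k) / (real m + 1) * pi"
    then have "crit_angle a < real (Suc k) / (real m + 1) * pi"
      using k(5) by simp
    from g_roots_in_grid_cell[OF assms(1,2) k(3,4) this] show ?zeros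
      by blast
  qed
  have "(real (Suc k) - 1) / (real m + 1) * pi = real k / (real m + 1) * pi" "int (Suc k) - 1 = int k"
    "int k < int (Suc k)" "Suc k \<le> m + 1"
    using k(2) by simp_all
  with k(1,4,5) roots show ?thesis
    unfolding crit_angle_def[symmetric] by (intro exI[of _ "Suc k"]) auto
qed

end
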